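(* Under the model and the scheme described in the context, for every $t\ge 1$, $$I\big(X_0;\,Q_t \,\big|\, (Q_i)_{i\le t-1}\big)=0.$$ Together with Claim 1 this gives $I\big((X_i)_{i\le 0};Q_t\mid (Q_i)_{i\le t-1}\big)=0$ for all $t\ge1$, i.e. the scheme satisfies the privacy constraint for the step privacy mode ($\mathrm{ON}$ for $t\le 0$, $\mathrm{OFF}$ for $t\ge1$).
   Context: Model. Fix $\alpha,\beta\in[0,1]$. The user's requests $\{X_t\}_{t\in\mathbb{Z}}$ form a time-homogeneous Markov chain on $\{A,B\}$ with $\Pr(X_{t+1}=B\mid X_t=A)=\alpha$ and $\Pr(X_{t+1}=A\mid X_t=B)=\beta$, and $0<\Pr(X_t=A)<1$ for every $t$. The user has mutually independent local randomness $\{S_t\}_{t\in\mathbb{Z}}$, independent of $\{X_t\}$. Scheme. Queries take values in $\{A,B,AB\}$. For $t\le 0$, $Q_t=AB$. For $t\ge1$, $Q_t$ is generated from $(X_0,X_t,Q_{t-1})$ and fresh randomness $S_t$ (so that, given $(X_0,X_t,Q_{t-1})$, $Q_t$ is conditionally independent of all other requests and queries) as follows. If $Q_{t-1}\in\{A,B\}$ then $Q_t=X_t$. If $Q_{t-1}=AB$, then the conditional law of $Q_t$ given $(X_0,X_t)$ is: (i) if $\alpha+\beta<1$: for $(X_0,X_t)=(A,A)$, $Q_t=A$ w.p. $\beta/(1-\alpha)$ and $Q_t=AB$ w.p. $(1-\alpha-\beta)/(1-\alpha)$; for $(A,B)$, $Q_t=B$; for $(B,A)$, $Q_t=A$; for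 $(B,B)$, $Q_t=B$ w.p. $\alpha/(1-\beta)$ and $Q_t=AB$ w.p. $(1-\alpha-\beta)/(1-\beta)$; (ii) if $\alpha+\beta=1$: $Q_t=X_t$; (iii) if $\alpha+\beta>1$ and $t$ even: for $(A,A)$, $Q_t=A$ w.p. $(1-\alpha)/\beta$ and $AB$ w.p. $(\alpha+\beta-1)/\beta$; for $(A,B)$, $Q_t=B$; for $(B,A)$, $Q_t=A$; for $(B,B)$, $Q_t=B$ w.p. $(1-\beta)/\alpha$ and $AB$ w.p. $(\alpha+\beta-1)/\alpha$; (iv) if $\alpha+\beta>1$ and $t$ odd: for $(A,A)$, $Q_t=A$; for $(A,B)$, $Q_t=B$ w.p. $(1-\beta)/\alpha$ and $AB$ w.p. $(\alpha+\beta-1)/\alpha$; for $(B,A)$, $Q_t=A$ w.p. $(1-\alpha)/\beta$ and $AB$ w.p. $(\alpha+\beta-1)/\beta$; for $(B,B)$, $Q_t=B$. *)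

theory Defs
  imports "HOL-Probability.Probability"
begin

datatype st = A | B
datatype qry = QA | QB | QAB

definition qry_of :: "st \<Rightarrow> qry" where
  "qry_of x = (case x of A \<Rightarrow> QA | B \<Rightarrow> QB)"

definition mix :: "real \<Rightarrow> 'a \<Rightarrow> 'a \<Rightarrow> 'a pmf" where
  "mix p q1 q2 = map_pmf (\<lambda>b. if b then q1 else q2) (bernoulli_pmf p)"

definition trans_pmf :: "real \<Rightarrow> real \<Rightarrow> st \<Rightarrow> st pmf" where
  "trans_pmf \<alpha> \<beta> x = (case x of A \<Rightarrow> mix \<alpha> B A | B \<Rightarrow> mix \<beta> A B)"

definition scheme_pmf :: "real \<Rightarrow> real \<Rightarrow> nat \<Rightarrow> st \<Rightarrow> st \<Rightarrow> qry \<Rightarrow> qry pmf" where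
  "scheme_pmf \<alpha> \<beta> t x0 xt qprev =
    (if qprev \<noteq> QAB then return_pmf (qry_of xt)
     else if \<alpha> + \<beta> < 1 then
       (case (x0, xt) of
          (A, A) \<Rightarrow> mix (\<beta> / (1 - \<alpha>)) QA QAB
        | (A, B) \<Rightarrow> return_pmf QB
        | (B, A) \<Rightarrow> return_pmf QA
        | (B, B) \<Rightarrow> mix (\<alpha> / (1 - \<beta>)) QB QAB)
     else if \<alpha> + \<beta> = 1 then return_pmf (qry_of xt)
     else if even t then
       (case (x0, xt) of
          (A, A) \<Rightarrow> mix ((1 - \<alpha>) / \<beta>) QA QAB
        | (A, B) \<Rightarrow> return_pmf QB
        | (B, A) \<Rightarrow> return_pmf QA
        | (B, B) \<Rightarrow> mix ((1 - \<beta>) / \<alpha>) QB QAB)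
     else
       (case (x0, xt) of
          (A, A) \<Rightarrow> return_pmf QA
        | (A, B) \<Rightarrow> mix ((1 - \<beta>) / \<alpha>) QB QAB
        | (B, A) \<Rightarrow> mix ((1 - \<alpha>) / \<beta>) QA QAB
        | (B, B) \<Rightarrow> return_pmf QB))"

text \<open>Joint law of ([X_0, ..., X_t], [Q_1, ..., Q_t]), where p = Pr(X_0 = A).
  Q_i = AB for i <= 0, hence Q_0 = AB is used as the previous query at t = 1.
  Each step draws X_t from the transition kernel and then Q_t with fresh randomness
  from the scheme, given (X_0, X_t, Q_(t-1)).\<close>
fun traj :: "real \<Rightarrow> real \<Rightarrow> real \<Rightarrow> nat \<Rightarrow> (st list \<times> qry list) pmf" where
  "traj p \<alpha> \<beta> 0 = map_pmf (\<lambda>b. ([if b then A else B], [])) (bernoulli_pmf p)"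
| "traj p \<alpha> \<beta> (Suc t) =
     bind_pmf (traj p \<alpha> \<beta> t) (\<lambda>(xs, qs).
       bind_pmf (trans_pmf \<alpha> \<beta> (last xs)) (\<lambda>x'.
         map_pmf (\<lambda>q'. (xs @ [x'], qs @ [q']))
           (scheme_pmf \<alpha> \<beta> (Suc t) (hd xs) x' (last (QAB # qs)))))"

definition X0_rv :: "st list \<times> qry list \<Rightarrow> st" where
  "X0_rv \<omega> = hd (fst \<omega>)"
definition Qlast_rv :: "st list \<times> qry list \<Rightarrow> qry" where
  "Qlast_rv \<omega> = last (snd \<omega>)"
definition Qpast_rv :: "st list \<times> qry list \<Rightarrow> qry list" where
  "Qpast_rv \<omega> = butlast (snd \<omega>)"

end

theory Submission
  imports Defs
begin

(*
  Along every trajectory the current request X_n is a function of X_0 and the past queries: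
  once some query differs from AB it equals the request and reveals it, and as long as all
  queries are AB the scheme can only have kept X_n equal to X_0 (or, when alpha + beta > 1,
  equal to its flip at odd times).  Hence Q_(n+1) is drawn from a kernel applied to
  (X_0, Q_1, ..., Q_n), and the mixing probabilities of the scheme are exactly those that make
  this kernel independent of X_0.  The joint law of (X_0, past queries, Q_(n+1)) then factors
  as D(x, z) K(z)(y), so X_0 and Q_(n+1) are conditionally independent given the past and the
  conditional mutual information vanishes.  Neither the initial law nor its stationarity plays
  any role.
*)

lemma integrable_count_space_finite_support:
  fixes f :: "'a \<Rightarrow> real"
  assumes "finite {x. f x \<noteq> 0}"
  shows "integrable (count_space UNIV) f"
proof -
  have "Infinite_Set_Sum.abs_summable_on f {x. f x \<noteq> 0}" using assms by simp
  then have "Infinite_Set_Sum.abs_summable_on f UNIV"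
    by (subst abs_summable_on_cong_neutral) auto
  then show ?thesis unfolding abs_summable_on_def .
qed

lemma distributed_measure_pmf:
  "distributed (measure_pmf M) (count_space UNIV) f (\<lambda>x. ennreal (pmf (map_pmf f M) x))"
  unfolding distributed_def
  by (simp add: map_pmf_rep_eq[symmetric] measure_pmf_eq_density[symmetric])

lemma pmf_bind_Pair:
  "pmf (bind_pmf D (\<lambda>a. map_pmf (Pair a) (K a))) (a, y) = pmf D a * pmf (K a) y"
proof -
  have "pmf (map_pmf (Pair a') (K a')) (a, y) = indicator {a} a' * pmf (K a) y" for a'
    by (cases "a' = a") (auto simp: pmf_map_inj' inj_on_def intro!: pmf_map_outside)
  then show ?thesis by (simp add: pmf_bind measure_pmf_single)
qed

lemma pair_count_space_UNIV:
  "count_space (UNIV :: 'a::countable set) \<Otimes>\<^sub>M count_space (UNIV :: 'b::countable set) =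
   count_space UNIV"
  by (simp add: pair_measure_countable)

lemma conditional_mutual_information_pmf:
  fixes M :: "'a pmf" and X :: "'a \<Rightarrow> 'x::countable"
    and Y :: "'a \<Rightarrow> 'y::countable" and Z :: "'a \<Rightarrow> 'z::countable"
  assumes "1 < b" "finite (set_pmf M)"
  defines "Pxyz \<equiv> pmf (map_pmf (\<lambda>\<omega>. (X \<omega>, Y \<omega>, Z \<omega>)) M)"
    and "Pxz \<equiv> pmf (map_pmf (\<lambda>\<omega>. (X \<omega>, Z \<omega>)) M)"
    and "Pyz \<equiv> pmf (map_pmf (\<lambda>\<omega>. (Y \<omega>, Z \<omega>)) M)"
    and "Pz \<equiv> pmf (map_pmf Z M)"
  shows "prob_space.conditional_mutual_information (measure_pmf M) b
           (count_space UNIV) (count_space UNIV) (count_space UNIV) X Y Z =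
         (\<integral>(x, y, z). Pxyz (x, y, z) * log b (Pxyz (x, y, z) / (Pxz (x, z) * (Pyz (y, z) / Pz z)))
           \<partial>count_space UNIV)"
proof -
  interpret information_space "measure_pmf M" b
    using assms(1) by unfold_locales
  have finite_support: "finite {w. f w \<noteq> 0}" if "\<And>w. f w \<noteq> 0 \<Longrightarrow> Pxyz w \<noteq> 0"
    for f :: "'x \<times> 'y \<times> 'z \<Rightarrow> real"
  proof (rule finite_subset)
    show "{w. f w \<noteq> 0} \<subseteq> set_pmf (map_pmf (\<lambda>\<omega>. (X \<omega>, Y \<omega>, Z \<omega>)) M)"
      using that by (auto simp: Pxyz_def set_pmf_iff simp del: set_map_pmf)
  qed (use assms(2) in simp)
  have integrable: "integrable (count_space UNIV \<Otimes>\<^sub>M (count_space UNIV \<Otimes>\<^sub>M count_space UNIV))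
     (\<lambda>(x, y, z). Pxyz (x, y, z) * log b (f x y z))" for f
    unfolding pair_count_space_UNIV
    by (rule integrable_count_space_finite_support, rule finite_support) auto
  have "distributed (measure_pmf M) (count_space UNIV \<Otimes>\<^sub>M count_space UNIV)
          (\<lambda>\<omega>. (Y \<omega>, Z \<omega>)) (\<lambda>w. ennreal (Pyz w))"
    and "distributed (measure_pmf M) (count_space UNIV \<Otimes>\<^sub>M count_space UNIV)
          (\<lambda>\<omega>. (X \<omega>, Z \<omega>)) (\<lambda>w. ennreal (Pxz w))"
    and "distributed (measure_pmf M) (count_space UNIV \<Otimes>\<^sub>M (count_space UNIV \<Otimes>\<^sub>M count_space UNIV))
          (\<lambda>\<omega>. (X \<omega>, Y \<omega>, Z \<omega>)) (\<lambda>w. ennreal (Pxyz w))"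
    unfolding pair_count_space_UNIV Pyz_def Pxz_def Pxyz_def by (fact distributed_measure_pmf)+
  then have "prob_space.conditional_mutual_information (measure_pmf M) b
           (count_space UNIV) (count_space UNIV) (count_space UNIV) X Y Z =
         (\<integral>(x, y, z). Pxyz (x, y, z) * log b (Pxyz (x, y, z) / (Pxz (x, z) * (Pyz (y, z) / Pz z)))
           \<partial>(count_space UNIV \<Otimes>\<^sub>M (count_space UNIV \<Otimes>\<^sub>M count_space UNIV)))"
    unfolding Pz_def
    by (intro conditional_mutual_information_generic_eq[where Px = "pmf (map_pmf X M)"]
          sigma_finite_measure_count_space distributed_measure_pmf integrable)
       (auto simp: Pxyz_def Pxz_def Pyz_def)
  then show ?thesis
    by (simp only: pair_count_space_UNIV)
qed

lemma conditional_mutual_information_pmf_eq_0: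
  fixes M :: "'a pmf" and X :: "'a \<Rightarrow> 'x::countable"
    and Y :: "'a \<Rightarrow> 'y::countable" and Z :: "'a \<Rightarrow> 'z::countable"
  assumes "1 < b" "finite (set_pmf M)"
    and joint: "map_pmf (\<lambda>\<omega>. ((X \<omega>, Z \<omega>), Y \<omega>)) M =
      bind_pmf D (\<lambda>a. map_pmf (Pair a) (K (snd a)))"
  shows "prob_space.conditional_mutual_information (measure_pmf M) b
           (count_space UNIV) (count_space UNIV) (count_space UNIV) X Y Z = 0"
proof -
  let ?Pxyz = "pmf (map_pmf (\<lambda>\<omega>. (X \<omega>, Y \<omega>, Z \<omega>)) M)"
  let ?Pxz = "pmf (map_pmf (\<lambda>\<omega>. (X \<omega>, Z \<omega>)) M)"
  let ?Pyz = "pmf (map_pmf (\<lambda>\<omega>. (Y \<omega>, Z \<omega>)) M)"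
  let ?Pz = "pmf (map_pmf Z M)"
  have pmf_XYZ: "?Pxyz (x, y, z) = pmf D (x, z) * pmf (K z) y" for x y z
  proof -
    have "map_pmf (\<lambda>\<omega>. (X \<omega>, Y \<omega>, Z \<omega>)) M
        = map_pmf (\<lambda>((x, z), y). (x, y, z)) (bind_pmf D (\<lambda>a. map_pmf (Pair a) (K (snd a))))"
      unfolding joint[symmetric] by (simp add: map_pmf_comp)
    moreover have "inj (\<lambda>((x :: 'x, z :: 'z), y :: 'y). (x, y, z))"
      by (auto simp: inj_def)
    ultimately show ?thesis
      using pmf_map_inj'[of "\<lambda>((x, z), y). (x, y, z)" _ "((x, z), y)"]
        pmf_bind_Pair[of D "\<lambda>a. K (snd a)" "(x, z)" y]
      by simp
  qed
  have law_XZ: "map_pmf (\<lambda>\<omega>. (X \<omega>, Z \<omega>)) M = D"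
  proof -
    have "map_pmf (\<lambda>\<omega>. (X \<omega>, Z \<omega>)) M = map_pmf fst (map_pmf (\<lambda>\<omega>. ((X \<omega>, Z \<omega>), Y \<omega>)) M)"
      by (simp add: map_pmf_comp)
    then show ?thesis
      unfolding joint by (simp add: map_bind_pmf map_pmf_comp bind_return_pmf')
  qed
  have pmf_YZ: "?Pyz (y, z) = pmf (map_pmf snd D) z * pmf (K z) y" for y z
  proof -
    have "map_pmf (\<lambda>\<omega>. (Y \<omega>, Z \<omega>)) M
        = map_pmf prod.swap (bind_pmf (map_pmf snd D) (\<lambda>z. map_pmf (Pair z) (K z)))"
    proof -
      have "map_pmf (\<lambda>\<omega>. (Y \<omega>, Z \<omega>)) M =
          map_pmf (\<lambda>((x, z), y). (y, z)) (map_pmf (\<lambda>\<omega>. ((X \<omega>, Z \<omega>), Y \<omega>)) M)"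
        by (simp add: map_pmf_comp)
      then show ?thesis
        unfolding joint by (simp add: map_bind_pmf map_pmf_comp bind_map_pmf split_beta)
    qed
    then show ?thesis
      using pmf_map_inj'[of prod.swap _ "(z, y)"] pmf_bind_Pair[of "map_pmf snd D" K z y] by simp
  qed
  have law_Z: "map_pmf Z M = map_pmf snd D"
    unfolding law_XZ[symmetric] by (simp add: map_pmf_comp)
  have integrand_eq_0:
    "?Pxyz (x, y, z) * log b (?Pxyz (x, y, z) / (?Pxz (x, z) * (?Pyz (y, z) / ?Pz z))) = 0"
    for x y z
  proof (cases "pmf D (x, z) = 0 \<or> pmf (K z) y = 0")
    case False
    then have "(x, z) \<in> set_pmf D" by (simp add: set_pmf_iff)
    then have "pmf (map_pmf snd D) z \<noteq> 0"
      by (metis pmf_positive set_map_pmf snd_conv image_eqI less_irrefl)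
    with False show ?thesis by (simp add: pmf_XYZ law_XZ pmf_YZ law_Z)
  qed (auto simp: pmf_XYZ)
  show ?thesis
    unfolding conditional_mutual_information_pmf[OF assms(1,2)]
    by (simp only: integrand_eq_0 split_beta' Bochner_Integration.integral_zero)
qed

instance st :: finite
proof
  have "(UNIV :: st set) = {A, B}" using st.exhaust by auto
  then show "finite (UNIV :: st set)" by (metis finite.emptyI finite.insertI)
qed

instance qry :: finite
proof
  have "(UNIV :: qry set) = {QA, QB, QAB}" using qry.exhaust by auto
  then show "finite (UNIV :: qry set)" by (metis finite.emptyI finite.insertI)
qed

fun flip_st :: "st \<Rightarrow> st" where "flip_st A = B" | "flip_st B = A"

text \<open>The only request at time t compatible with the query AB, given X_0.\<close>
definition ab_state :: "real \<Rightarrow> real \<Rightarrow> nat \<Rightarrow> st \<Rightarrow> st" where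
  "ab_state \<alpha> \<beta> t x0 = (if 1 < \<alpha> + \<beta> \<and> odd t then flip_st x0 else x0)"

lemma set_pmf_mix_subset: "set_pmf (mix p a b) \<subseteq> {a, b}"
  by (auto simp: mix_def)

lemma pmf_bind_mix:
  assumes "0 \<le> p" "p \<le> 1"
  shows "pmf (bind_pmf (mix p a b) f) y = p * pmf (f a) y + (1 - p) * pmf (f b) y"
  using assms by (simp add: mix_def bind_map_pmf pmf_bind)

lemma pmf_mix:
  assumes "0 \<le> p" "p \<le> 1"
  shows "pmf (mix p a b) x = (if x = a then p else 0) + (if x = b then 1 - p else 0)"
  using pmf_bind_mix[OF assms, of a b return_pmf x] by (simp add: bind_return_pmf' pmf_return)

text \<open>The value at QAB is irrelevant: it is only applied to queries different from AB.\<close>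
fun st_of_qry :: "qry \<Rightarrow> st" where
  "st_of_qry QA = A" | "st_of_qry QB = B" | "st_of_qry QAB = A"

definition current_state :: "real \<Rightarrow> real \<Rightarrow> nat \<Rightarrow> st \<Rightarrow> qry list \<Rightarrow> st" where
  "current_state \<alpha> \<beta> n x0 qs =
     (if last (QAB # qs) = QAB then ab_state \<alpha> \<beta> n x0 else st_of_qry (last qs))"

definition query_kernel :: "real \<Rightarrow> real \<Rightarrow> nat \<Rightarrow> st \<Rightarrow> qry list \<Rightarrow> qry pmf" where
  "query_kernel \<alpha> \<beta> n x0 qs = bind_pmf (trans_pmf \<alpha> \<beta> (current_state \<alpha> \<beta> n x0 qs))
      (\<lambda>x'. scheme_pmf \<alpha> \<beta> (Suc n) x0 x' (last (QAB # qs)))"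

lemma query_kernel_indep_initial:
  assumes "0 \<le> \<alpha>" "\<alpha> \<le> 1" "0 \<le> \<beta>" "\<beta> \<le> 1"
  shows "query_kernel \<alpha> \<beta> n A qs = query_kernel \<alpha> \<beta> n B qs"
proof (cases "last (QAB # qs) = QAB")
  case False
  then show ?thesis by (simp add: query_kernel_def current_state_def scheme_pmf_def)
next
  case True
  have "pmf (query_kernel \<alpha> \<beta> n A qs) q = pmf (query_kernel \<alpha> \<beta> n B qs) q" for q
    using assms True
    by (cases q; cases "even n"; cases "\<alpha> + \<beta> < 1"; cases "\<alpha> + \<beta> = 1")
       (auto simp: query_kernel_def current_state_def ab_state_def trans_pmf_def pmf_bind_mix
          scheme_pmf_def pmf_mix field_simps qry_of_def)
  then show ?thesis by (rule pmf_eqI)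
qed

lemma traj_last_state:
  assumes "\<omega> \<in> set_pmf (traj p \<alpha> \<beta> n)"
  shows "fst \<omega> \<noteq> [] \<and> last (fst \<omega>) = current_state \<alpha> \<beta> n (hd (fst \<omega>)) (snd \<omega>)"
  using assms
proof (induction n arbitrary: \<omega>)
  case 0
  then show ?case by (auto simp: current_state_def ab_state_def)
next
  case (Suc n)
  then obtain xs qs x' q' where
    prefix: "(xs, qs) \<in> set_pmf (traj p \<alpha> \<beta> n)" and
    query: "q' \<in> set_pmf (scheme_pmf \<alpha> \<beta> (Suc n) (hd xs) x' (last (QAB # qs)))" and
    \<omega>: "\<omega> = (xs @ [x'], qs @ [q'])"
    by (auto split: prod.splits)
  have "q' = QAB \<longrightarrow> x' = ab_state \<alpha> \<beta> (Suc n) (hd xs)" "q' \<noteq> QAB \<longrightarrow> q' = qry_of x'"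
    using query set_pmf_mix_subset[of _ QA QAB] set_pmf_mix_subset[of _ QB QAB]
    by (cases "hd xs"; cases x';
        auto simp: scheme_pmf_def ab_state_def qry_of_def split: if_splits)+
  moreover have "st_of_qry (qry_of x) = x" for x
    by (cases x) (auto simp: qry_of_def)
  ultimately show ?case
    using Suc.IH[OF prefix] \<omega> by (auto simp: current_state_def)
qed

lemma finite_set_pmf_traj: "finite (set_pmf (traj p \<alpha> \<beta> n))"
  by (induction n) (auto simp: set_bind_pmf split: prod.splits)

lemma traj_Suc_query_law:
  assumes "0 \<le> \<alpha>" "\<alpha> \<le> 1" "0 \<le> \<beta>" "\<beta> \<le> 1"
  shows "map_pmf (\<lambda>\<omega>. ((X0_rv \<omega>, Qpast_rv \<omega>), Qlast_rv \<omega>)) (traj p \<alpha> \<beta> (Suc n)) =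
    bind_pmf (map_pmf (\<lambda>\<omega>. (hd (fst \<omega>), snd \<omega>)) (traj p \<alpha> \<beta> n))
      (\<lambda>a. map_pmf (Pair a) (query_kernel \<alpha> \<beta> n A (snd a)))"
  unfolding traj.simps map_bind_pmf bind_map_pmf
proof (rule bind_pmf_cong[OF refl], clarify, unfold prod.sel)
  fix xs qs assume "(xs, qs) \<in> set_pmf (traj p \<alpha> \<beta> n)"
  then have "xs \<noteq> []" and last_xs: "last xs = current_state \<alpha> \<beta> n (hd xs) qs"
    using traj_last_state by fastforce+
  then have "map_pmf (\<lambda>\<omega>. ((X0_rv \<omega>, Qpast_rv \<omega>), Qlast_rv \<omega>))
      (trans_pmf \<alpha> \<beta> (last xs) \<bind> (\<lambda>x'. map_pmf (\<lambda>q'. (xs @ [x'], qs @ [q']))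
         (scheme_pmf \<alpha> \<beta> (Suc n) (hd xs) x' (last (QAB # qs)))))
    = map_pmf (Pair (hd xs, qs)) (query_kernel \<alpha> \<beta> n (hd xs) qs)" (is "?lhs = _")
    unfolding last_xs query_kernel_def
    by (simp add: map_bind_pmf map_pmf_comp X0_rv_def Qpast_rv_def Qlast_rv_def)
  also have "query_kernel \<alpha> \<beta> n (hd xs) qs = query_kernel \<alpha> \<beta> n A qs"
    using query_kernel_indep_initial[OF assms] by (cases "hd xs") auto
  finally show "?lhs = map_pmf (Pair (hd xs, qs)) (query_kernel \<alpha> \<beta> n A qs)" .
qed

lemma surj_trajectory_rvs: "surj X0_rv" "surj Qlast_rv" "surj Qpast_rv"
proof -
  show "surj X0_rv" by (rule surjI[of _ "\<lambda>x. ([x], [])"]) (simp add: X0_rv_def)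
  show "surj Qlast_rv" by (rule surjI[of _ "\<lambda>q. ([], [q])"]) (simp add: Qlast_rv_def)
  show "surj Qpast_rv" by (rule surjI[of _ "\<lambda>qs. ([], qs @ [QA])"]) (simp add: Qpast_rv_def)
qed

theorem claim2:
  fixes \<alpha> \<beta> p :: real and t :: nat
  assumes "0 \<le> \<alpha>" "\<alpha> \<le> 1" "0 \<le> \<beta>" "\<beta> \<le> 1"
    and "\<exists>\<pi> :: int \<Rightarrow> real. \<pi> 0 = p
           \<and> (\<forall>s. \<pi> (s + 1) = \<pi> s * (1 - \<alpha>) + (1 - \<pi> s) * \<beta>)
           \<and> (\<forall>s. 0 < \<pi> s \<and> \<pi> s < 1)"
    and "1 \<le> t"
  shows "prob_space.conditional_mutual_information (measure_pmf (traj p \<alpha> \<beta> t)) 2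
           (count_space (X0_rv ` space (measure_pmf (traj p \<alpha> \<beta> t))))
           (count_space (Qlast_rv ` space (measure_pmf (traj p \<alpha> \<beta> t))))
           (count_space (Qpast_rv ` space (measure_pmf (traj p \<alpha> \<beta> t))))
           X0_rv Qlast_rv Qpast_rv = 0"
proof -
  obtain n where t: "t = Suc n"
    using \<open>1 \<le> t\<close> by (cases t) auto
  have "prob_space.conditional_mutual_information (measure_pmf (traj p \<alpha> \<beta> (Suc n))) 2
      (count_space UNIV) (count_space UNIV) (count_space UNIV) X0_rv Qlast_rv Qpast_rv = 0"
    by (rule conditional_mutual_information_pmf_eq_0[OF _ finite_set_pmf_traj
          traj_Suc_query_law[OF assms(1-4)]]) simp
  then show ?thesis
    by (simp add: t surj_trajectory_rvs)
qed

end
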